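(* Let $\mu\in\mathbb{R}\setminus\{0\}$ and let $g$ be the skew-symmetric-Laplace-uniform density with parameter $\mu$ (defined in the context). Then the mode $M_0$ of $g$ (the point at which $g$ attains its maximum) is $$M_0=\begin{cases}\mu & \text{if } 0<|\mu|<\tfrac12,\\ \operatorname{sign}(\mu)-\mu & \text{if } \tfrac12\le|\mu|<1,\\ 0 & \text{if } |\mu|\ge 1.\end{cases}$$
   Context: For $\mu\in\mathbb{R}\setminus\{0\}$, the skew-symmetric-Laplace-uniform distribution $SSLUD(\mu)$ is the distribution on $\mathbb{R}$ with density $$g(x)=\begin{cases} 0 & \text{if } x/\mu<-1,\\ e^{-|x|}\left(\dfrac{x}{2\mu}+\dfrac12\right) & \text{if } -1\le x/\mu<1,\\ e^{-|x|} & \text{if } x/\mu\ge 1.\end{cases}$$ *)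

theory Defs
  imports Complex_Main
begin

definition sslud_density :: "real \<Rightarrow> real \<Rightarrow> real" where
  "sslud_density \<mu> x =
     (if x / \<mu> < -1 then 0
      else if x / \<mu> < 1 then exp (- \<bar>x\<bar>) * (x / (2 * \<mu>) + 1 / 2)
      else exp (- \<bar>x\<bar>))"

definition is_mode :: "(real \<Rightarrow> real) \<Rightarrow> real \<Rightarrow> bool" where
  "is_mode g M \<longleftrightarrow> (\<forall>x. g x \<le> g M) \<and> (\<forall>y. (\<forall>x. g x \<le> g y) \<longrightarrow> y = M)"

end

theory Submission
  imports Defs
begin

text \<open>
  For \<open>\<mu> > 0\<close> the density vanishes left of \<open>-\<mu>\<close>, stays below \<open>1/2 = g 0\<close> on \<open>[-\<mu>, 0)\<close>
  and decreases right of \<open>\<mu>\<close>. On \<open>[0, \<mu>]\<close> it equals \<open>exp \<mu> / (2\<mu>) \<cdot> \<phi> (x + \<mu>)\<close> with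
  \<open>\<phi> s = s e\<^sup>-\<^sup>s\<close>, which increases on \<open>(-\<infinity>, 1]\<close> and decreases on \<open>[1, \<infinity>)\<close>. Hence the maximum
  is attained exactly where \<open>x + \<mu>\<close> is the point of \<open>[\<mu>, 2\<mu>]\<close> nearest to \<open>1\<close>, i.e. at
  \<open>x = \<mu>\<close>, \<open>1 - \<mu>\<close> or \<open>0\<close> according as \<open>2\<mu> < 1\<close>, \<open>\<mu> \<le> 1 \<le> 2\<mu>\<close> or \<open>1 < \<mu>\<close>.
  Negative \<open>\<mu>\<close> reduce to positive ones by the reflection \<open>g\<^sub>-\<^sub>\<mu> x = g\<^sub>\<mu> (-x)\<close>.
\<close>

lemma is_modeI:
  assumes "\<And>x. x \<noteq> M \<Longrightarrow> g x < g M"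
  shows "is_mode g M"
  using assms unfolding is_mode_def by (metis less_le_not_le order_refl)

lemma is_mode_reflect: "is_mode g M \<Longrightarrow> is_mode (\<lambda>x. g (- x)) (- M)"
  unfolding is_mode_def by (metis minus_minus)

lemma has_real_derivative_mult_exp_neg:
  "((\<lambda>s. s * exp (- s)) has_real_derivative (1 - s) * exp (- s)) (at s)"
  by (auto intro!: derivative_eq_intros simp: algebra_simps)

lemma mult_exp_neg_strict_mono:
  fixes s t :: real
  assumes "s < t" "t \<le> 1"
  shows "s * exp (- s) < t * exp (- t)"
  using assms
  by (intro DERIV_pos_imp_increasing_open[OF \<open>s < t\<close>] continuous_intros)
     (auto intro!: exI has_real_derivative_mult_exp_neg)

lemma mult_exp_neg_strict_antimono:
  fixes s t :: real
  assumes "1 \<le> s" "s < t"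
  shows "t * exp (- t) < s * exp (- s)"
  using assms
  by (intro DERIV_neg_imp_decreasing_open[OF \<open>s < t\<close>] continuous_intros)
     (auto intro!: exI has_real_derivative_mult_exp_neg simp: mult_neg_pos)

lemma mult_exp_neg_less_at_nearest_one:
  fixes a b s :: real
  defines "c \<equiv> max a (min 1 b)"
  assumes "s \<in> {a..b}" "s \<noteq> c"
  shows "s * exp (- s) < c * exp (- c)"
proof (cases "s < c")
  case True
  then have "c \<le> 1" using assms by (auto simp: c_def)
  with True show ?thesis by (rule mult_exp_neg_strict_mono)
next
  case False
  then have "c < s" using assms(3) by simp
  then have "1 \<le> c" using assms(2) by (auto simp: c_def)
  with \<open>c < s\<close> show ?thesis by (intro mult_exp_neg_strict_antimono)
qed

lemma sslud_density_uminus: "sslud_density (- \<mu>) x = sslud_density \<mu> (- x)"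
  by (simp add: sslud_density_def)

lemma sslud_density_neg_less_half:
  assumes "\<mu> > 0" "x < 0"
  shows "sslud_density \<mu> x < 1 / 2"
proof (cases "x < - \<mu>")
  case True
  then show ?thesis using assms by (simp add: sslud_density_def divide_less_eq)
next
  case False
  have "exp x * (x / (2 * \<mu>) + 1 / 2) \<le> 1 * (x / (2 * \<mu>) + 1 / 2)"
    using False assms by (intro mult_right_mono) (auto simp: field_simps)
  also have "\<dots> < 1 / 2"
    using assms by (simp add: divide_neg_pos)
  finally show ?thesis
    using False assms by (simp add: sslud_density_def divide_less_eq)
qed

lemma sslud_density_zero: "\<mu> > 0 \<Longrightarrow> sslud_density \<mu> 0 = 1 / 2"
  by (simp add: sslud_density_def)

lemma sslud_density_core:
  assumes "\<mu> > 0" "0 \<le> x" "x \<le> \<mu>"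
  shows "sslud_density \<mu> x = exp \<mu> / (2 * \<mu>) * ((x + \<mu>) * exp (- (x + \<mu>)))"
proof (cases "x = \<mu>")
  case True
  then show ?thesis
    using assms by (simp add: sslud_density_def exp_add[symmetric] exp_minus field_simps)
next
  case False
  then show ?thesis
    using assms by (simp add: sslud_density_def divide_less_eq exp_add[symmetric] field_simps)
qed

lemma sslud_density_tail: "\<mu> > 0 \<Longrightarrow> \<mu> \<le> x \<Longrightarrow> sslud_density \<mu> x = exp (- x)"
  by (simp add: sslud_density_def divide_less_eq)

lemma is_mode_sslud_density_pos:
  assumes "\<mu> > 0"
  shows "is_mode (sslud_density \<mu>) (max \<mu> (min 1 (2 * \<mu>)) - \<mu>)"
    (is "is_mode ?g ?M")
proof (rule is_modeI)
  have core_less: "?g x < ?g ?M" if "0 \<le> x" "x \<le> \<mu>" "x \<noteq> ?M" for x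
  proof -
    have "(x + \<mu>) * exp (- (x + \<mu>)) < (?M + \<mu>) * exp (- (?M + \<mu>))"
      using that mult_exp_neg_less_at_nearest_one[of "x + \<mu>" \<mu> "2 * \<mu>"] by auto
    moreover have "0 \<le> ?M" "?M \<le> \<mu>" "0 < exp \<mu> / (2 * \<mu>)" using assms by auto
    ultimately show ?thesis
      using that assms by (simp only: sslud_density_core mult_less_cancel_left_pos)
  qed
  have "?g 0 \<le> ?g ?M" "?g \<mu> \<le> ?g ?M"
    using core_less[of 0] core_less[of \<mu>] assms by (metis less_imp_le order_refl)+
  fix x
  assume "x \<noteq> ?M"
  consider "x < 0" | "0 \<le> x" "x \<le> \<mu>" | "\<mu> < x" by linarith
  then show "?g x < ?g ?M"
  proof cases
    case 1
    then show ?thesis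
      using sslud_density_neg_less_half sslud_density_zero assms \<open>?g 0 \<le> ?g ?M\<close> by fastforce
  next
    case 2
    then show ?thesis using core_less \<open>x \<noteq> ?M\<close> by blast
  next
    case 3
    then have "?g x < ?g \<mu>" using assms by (simp add: sslud_density_tail)
    then show ?thesis using \<open>?g \<mu> \<le> ?g ?M\<close> by linarith
  qed
qed

theorem mainTheorem4:
  fixes \<mu> :: real
  assumes "\<mu> \<noteq> 0"
  shows "is_mode (sslud_density \<mu>)
           (if \<bar>\<mu>\<bar> < 1 / 2 then \<mu>
            else if \<bar>\<mu>\<bar> < 1 then sgn \<mu> - \<mu>
            else 0)"
proof -
  let ?m = "\<lambda>\<nu>::real. max \<nu> (min 1 (2 * \<nu>)) - \<nu>"
  have "is_mode (sslud_density \<mu>) (sgn \<mu> * ?m \<bar>\<mu>\<bar>)"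
  proof (cases "\<mu> > 0")
    case True
    then show ?thesis using is_mode_sslud_density_pos by simp
  next
    case False
    then have "is_mode (\<lambda>x. sslud_density (- \<mu>) (- x)) (- ?m (- \<mu>))"
      using assms by (intro is_mode_reflect is_mode_sslud_density_pos) simp
    then show ?thesis using False assms by (simp add: sslud_density_uminus sgn_if add.commute)
  qed
  moreover have "sgn \<mu> * ?m \<bar>\<mu>\<bar> =
      (if \<bar>\<mu>\<bar> < 1 / 2 then \<mu> else if \<bar>\<mu>\<bar> < 1 then sgn \<mu> - \<mu> else 0)"
    using assms by (auto simp: sgn_if)
  ultimately show ?thesis by simp
qed

end
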